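(* For $k\ge1$ let $N_{2k,k}$ be the reflexive graph on vertex set $\{1,\dots,2k\}$ in which every pair of distinct vertices is adjacent except the pairs $\{1,2\},\{3,4\},\dots,\{2k-1,2k\}$. The family $\{N_{2k,k}: k=1,2,3,\dots\}$ is an antichain under the standard homomorphic image ordering, and hence also under the strong homomorphic image ordering.
   Context: Graphs here are reflexive (loop at every vertex, symmetric edge relation). A homomorphism maps edges to edges; it is strong if additionally every edge of the target between vertices of the image is the image of an edge. Standard homomorphic image ordering: $A\preceq B$ iff there is a surjective homomorphism $B\to A$; strong: iff there is a surjective strong homomorphism $B\to A$. An antichain is a set of pairwise incomparable elements. *)

theory Defs
  imports Main
begin

type_synonym 'a rgraph = "'a set \<times> ('a \<Rightarrow> 'a \<Rightarrow> bool)"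

definition verts :: "'a rgraph \<Rightarrow> 'a set" where "verts G = fst G"
definition adj :: "'a rgraph \<Rightarrow> 'a \<Rightarrow> 'a \<Rightarrow> bool" where "adj G = snd G"

definition reflexive_graph :: "'a rgraph \<Rightarrow> bool" where
  "reflexive_graph G \<longleftrightarrow>
     (\<forall>x y. adj G x y \<longrightarrow> x \<in> verts G \<and> y \<in> verts G) \<and>
     (\<forall>x y. adj G x y \<longrightarrow> adj G y x) \<and>
     (\<forall>x \<in> verts G. adj G x x)"

definition graph_hom :: "('a \<Rightarrow> 'b) \<Rightarrow> 'a rgraph \<Rightarrow> 'b rgraph \<Rightarrow> bool" where
  "graph_hom f G H \<longleftrightarrow>
     (\<forall>x \<in> verts G. f x \<in> verts H) \<and>
     (\<forall>x \<in> verts G. \<forall>y \<in> verts G. adj G x y \<longrightarrow> adj H (f x) (f y))"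

definition strong_graph_hom :: "('a \<Rightarrow> 'b) \<Rightarrow> 'a rgraph \<Rightarrow> 'b rgraph \<Rightarrow> bool" where
  "strong_graph_hom f G H \<longleftrightarrow> graph_hom f G H \<and>
     (\<forall>u \<in> f ` verts G. \<forall>v \<in> f ` verts G. adj H u v \<longrightarrow>
        (\<exists>x \<in> verts G. \<exists>y \<in> verts G. f x = u \<and> f y = v \<and> adj G x y))"

definition hom_image_le :: "'a rgraph \<Rightarrow> 'b rgraph \<Rightarrow> bool" where
  "hom_image_le A B \<longleftrightarrow> (\<exists>f. graph_hom f B A \<and> f ` verts B = verts A)"

definition strong_hom_image_le :: "'a rgraph \<Rightarrow> 'b rgraph \<Rightarrow> bool" where
  "strong_hom_image_le A B \<longleftrightarrow> (\<exists>f. strong_graph_hom f B A \<and> f ` verts B = verts A)"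

definition N_graph :: "nat \<Rightarrow> nat rgraph" where
  "N_graph k = ({1..2*k},
     (\<lambda>x y. x \<in> {1..2*k} \<and> y \<in> {1..2*k} \<and>
        (x = y \<or> \<not> (\<exists>i \<in> {1..k}. {x, y} = {2*i - 1, 2*i}))))"

end

theory Submission
  imports Defs
begin

text \<open>Every vertex of N_{2k,k} has exactly one non-neighbour, its partner.
A surjective homomorphism f from N_{2l,l} onto N_{2k,k} is therefore injective:
if f a = f a', pick a preimage b of the partner of f a; then b is adjacent to
neither a nor a', so both are the partner of b. Hence f is a bijection and l = k.\<close>

definition N_partner :: "nat \<Rightarrow> nat" where
  "N_partner x = (if odd x then x + 1 else x - 1)"

lemma verts_N_graph: "verts (N_graph k) = {1..2*k}"
  by (simp add: verts_def N_graph_def)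

lemma N_partner_in_verts: "x \<in> {1..2*k} \<Longrightarrow> N_partner x \<in> {1..2*k}"
  unfolding N_partner_def by auto presburger

text \<open>Truncated subtraction makes 0 its own partner, hence the hypotheses 0 < x.\<close>

lemma N_partner_neq: "0 < x \<Longrightarrow> x \<noteq> N_partner x"
  unfolding N_partner_def by auto

lemma N_partner_N_partner: "0 < x \<Longrightarrow> N_partner (N_partner x) = x"
  unfolding N_partner_def by (auto elim!: oddE)

lemma N_partner_eq_iff: "0 < x \<Longrightarrow> 0 < y \<Longrightarrow> N_partner x = N_partner y \<longleftrightarrow> x = y"
  using N_partner_N_partner by metis

lemma N_pair_iff_partner:
  assumes "x \<in> {1..2*k}"
  shows "(\<exists>i\<in>{1..k}. {x, y} = {2*i - 1, 2*i}) \<longleftrightarrow> y = N_partner x"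
proof
  assume "\<exists>i\<in>{1..k}. {x, y} = {2*i - 1, 2*i}"
  then obtain i where "i \<ge> 1" "{x, y} = {2*i - 1, 2*i}" by auto
  then show "y = N_partner x"
    unfolding N_partner_def doubleton_eq_iff by auto
next
  assume "y = N_partner x"
  moreover have "(x + 1) div 2 \<in> {1..k}" using assms by auto
  moreover have "{x, N_partner x} = {2 * ((x + 1) div 2) - 1, 2 * ((x + 1) div 2)}"
    unfolding N_partner_def by (cases "odd x") (auto simp: doubleton_eq_iff elim!: oddE evenE)
  ultimately show "\<exists>i\<in>{1..k}. {x, y} = {2*i - 1, 2*i}" by blast
qed

lemma adj_N_graph_iff:
  "adj (N_graph k) x y \<longleftrightarrow> x \<in> {1..2*k} \<and> y \<in> {1..2*k} \<and> y \<noteq> N_partner x"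
proof (cases "x \<in> {1..2*k}")
  case True
  then show ?thesis
    unfolding adj_def N_graph_def using N_pair_iff_partner[OF True] N_partner_neq[of x] by auto
qed (auto simp: adj_def N_graph_def)

lemma adj_N_graph_sym: "adj (N_graph k) x y \<Longrightarrow> adj (N_graph k) y x"
  by (auto simp: adj_N_graph_iff N_partner_N_partner)

lemma reflexive_graph_N_graph: "reflexive_graph (N_graph k)"
  unfolding reflexive_graph_def verts_N_graph
  using adj_N_graph_sym by (auto simp: adj_N_graph_iff N_partner_neq)

lemma surj_graph_hom_inj_on:
  assumes hom: "graph_hom f G H" and surj: "f ` verts G = verts H"
    and H_non_adj: "\<forall>y\<in>verts H. \<exists>z\<in>verts H. \<not> adj H y z"
    and G_non_adj_unique: "\<forall>b\<in>verts G. \<forall>a\<in>verts G. \<forall>a'\<in>verts G.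
          \<not> adj G a b \<longrightarrow> \<not> adj G a' b \<longrightarrow> a = a'"
  shows "inj_on f (verts G)"
proof
  have hom_adj: "adj H (f x) (f y)" if "x \<in> verts G" "y \<in> verts G" "adj G x y" for x y
    using hom that unfolding graph_hom_def by blast
  fix a a' assume a: "a \<in> verts G" and a': "a' \<in> verts G" and eq: "f a = f a'"
  have "f a \<in> verts H" using a surj by blast
  then obtain z where z: "z \<in> verts H" "\<not> adj H (f a) z"
    using H_non_adj by blast
  then obtain b where b: "b \<in> verts G" "z = f b" using surj by blast
  have "\<not> adj G a b" using hom_adj[OF a b(1)] z(2) b(2) by blast
  moreover have "\<not> adj G a' b" using hom_adj[OF a' b(1)] z(2) b(2) eq by auto
  ultimately show "a = a'" using G_non_adj_unique a a' b(1) by blast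
qed

lemma hom_image_le_N_graph_imp_eq:
  assumes "hom_image_le (N_graph k) (N_graph l)"
  shows "k = l"
proof -
  obtain f where hom: "graph_hom f (N_graph l) (N_graph k)"
    and surj: "f ` verts (N_graph l) = verts (N_graph k)"
    using assms unfolding hom_image_le_def by blast
  have "inj_on f (verts (N_graph l))"
  proof (rule surj_graph_hom_inj_on[OF hom surj])
    show "\<forall>y\<in>verts (N_graph k). \<exists>z\<in>verts (N_graph k). \<not> adj (N_graph k) y z"
      using N_partner_in_verts unfolding verts_N_graph adj_N_graph_iff by blast
    show "\<forall>b\<in>verts (N_graph l). \<forall>a\<in>verts (N_graph l). \<forall>a'\<in>verts (N_graph l).
        \<not> adj (N_graph l) a b \<longrightarrow> \<not> adj (N_graph l) a' b \<longrightarrow> a = a'"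
      by (auto simp: verts_N_graph adj_N_graph_iff N_partner_eq_iff)
  qed
  then have "card (verts (N_graph l)) = card (verts (N_graph k))"
    using surj card_image by metis
  then show ?thesis by (simp add: verts_N_graph)
qed

lemma strong_hom_image_le_imp_hom_image_le:
  "strong_hom_image_le A B \<Longrightarrow> hom_image_le A B"
  unfolding strong_hom_image_le_def strong_graph_hom_def hom_image_le_def by blast

theorem proposition3p3:
  shows "(\<forall>k\<ge>1. reflexive_graph (N_graph k)) \<and>
    (\<forall>k l. 1 \<le> k \<longrightarrow> 1 \<le> l \<longrightarrow> k \<noteq> l \<longrightarrow>
       \<not> hom_image_le (N_graph k) (N_graph l)) \<and>
    (\<forall>k l. 1 \<le> k \<longrightarrow> 1 \<le> l \<longrightarrow> k \<noteq> l \<longrightarrow>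
       \<not> strong_hom_image_le (N_graph k) (N_graph l))"
proof (intro conjI allI impI)
  fix k l :: nat assume "k \<noteq> l"
  then show "\<not> hom_image_le (N_graph k) (N_graph l)"
    using hom_image_le_N_graph_imp_eq by blast
  then show "\<not> strong_hom_image_le (N_graph k) (N_graph l)"
    using strong_hom_image_le_imp_hom_image_le by blast
qed (rule reflexive_graph_N_graph)

end
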